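(* Let $u_0$ be as in the context and put $K_0:=\sup_{X} y^2e^{-2u_0}|P(z)|^2<\infty$. Then $w_+:=u_0+y$ is a (classical, hence weak) super-solution of $( * )$ on $X$. Moreover, for every constant $C\ge \max\{1,K_0\}$, the continuous function $w_-:=u_0+f_C(y)$ is a weak sub-solution of $( * )$ on $X$, and $u_0\le w_-\le w_+$ on $X$.
   Context: Let $X=\mathbb{R}^2\times(0,+\infty)$ with coordinates $(x_1,x_2,y)$, $z=x_1+ix_2$, $R=\sqrt{|z|^2+y^2}$, and $\Delta=\partial_1^2+\partial_2^2+\partial_y^2$. Let $P(z)$ be a non-zero complex polynomial of degree $N$. Consider the equation $( * )$: $\Delta u+e^{-2u}|P(z)|^2=0$ on $X$. A continuous function $u$ on $X$ is a weak sub-solution (resp. super-solution) of $( * )$ if $\int_X\big(-u\Delta v-e^{-2u}|P|^2v\big)\le 0$ (resp. $\ge 0$) for every non-negative compactly supported smooth $v$ on $X$. Let $u_0$ be a smooth solution of $( * )$ on $X$ (the He–Mazzeo model solution satisfying the generalized Nahm pole boundary condition) with the properties: $\sup_X y\,e^{-u_0}|P(z)|<\infty$, and there are $R_0,K>0$ with $|u_0-N\ln R-\ln y|\le K$ whenever $R\ge R_0$. For $C\ge 1$ define $f_C(y)=0$ for $0<y\le C$ and $f_C(y)=y-C\ln(y/C)-C$ for $y\ge C$. *)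

theory Defs
  imports "HOL-Analysis.Analysis" "HOL-Computational_Algebra.Polynomial"
begin

text \<open>Points of R^3 are triples (x1, x2, y) :: real \<times> real \<times> real.\<close>

definition ycoord :: "real \<times> real \<times> real \<Rightarrow> real" where
  "ycoord p = snd (snd p)"

definition zcoord :: "real \<times> real \<times> real \<Rightarrow> complex" where
  "zcoord p = Complex (fst p) (fst (snd p))"

definition Rad :: "real \<times> real \<times> real \<Rightarrow> real" where
  "Rad p = sqrt ((fst p)\<^sup>2 + (fst (snd p))\<^sup>2 + (snd (snd p))\<^sup>2)"

definition Xspace :: "(real \<times> real \<times> real) set" where
  "Xspace = {p. ycoord p > 0}"

definition pderiv_dir :: "(real \<times> real \<times> real) \<Rightarrow> (real \<times> real \<times> real \<Rightarrow> real)
    \<Rightarrow> real \<times> real \<times> real \<Rightarrow> real" where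
  "pderiv_dir i f x = deriv (\<lambda>t. f (x + t *\<^sub>R i)) 0"

fun Ck_on :: "nat \<Rightarrow> (real \<times> real \<times> real) set \<Rightarrow> (real \<times> real \<times> real \<Rightarrow> real) \<Rightarrow> bool" where
  "Ck_on 0 S f = continuous_on S f"
| "Ck_on (Suc k) S f = (continuous_on S f \<and> (\<forall>x\<in>S. f differentiable (at x)) \<and>
      (\<forall>i\<in>Basis. Ck_on k S (pderiv_dir i f)))"

definition smooth_on :: "(real \<times> real \<times> real) set \<Rightarrow> (real \<times> real \<times> real \<Rightarrow> real) \<Rightarrow> bool" where
  "smooth_on S f = (\<forall>k. Ck_on k S f)"

definition Lap :: "(real \<times> real \<times> real \<Rightarrow> real) \<Rightarrow> real \<times> real \<times> real \<Rightarrow> real" where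
  "Lap f x = (\<Sum>i\<in>Basis. pderiv_dir i (pderiv_dir i f) x)"

definition test_fun :: "(real \<times> real \<times> real \<Rightarrow> real) \<Rightarrow> bool" where
  "test_fun v = (smooth_on UNIV v \<and> (\<forall>p. v p \<ge> 0) \<and>
     (\<exists>K. compact K \<and> K \<subseteq> Xspace \<and> (\<forall>p. p \<notin> K \<longrightarrow> v p = 0)))"

definition weak_subsol :: "complex poly \<Rightarrow> (real \<times> real \<times> real \<Rightarrow> real) \<Rightarrow> bool" where
  "weak_subsol P u = (continuous_on Xspace u \<and>
     (\<forall>v. test_fun v \<longrightarrow>
        set_lebesgue_integral lborel Xspace
          (\<lambda>p. - u p * Lap v p - exp (-2 * u p) * (cmod (poly P (zcoord p)))\<^sup>2 * v p) \<le> 0))"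

definition weak_supersol :: "complex poly \<Rightarrow> (real \<times> real \<times> real \<Rightarrow> real) \<Rightarrow> bool" where
  "weak_supersol P u = (continuous_on Xspace u \<and>
     (\<forall>v. test_fun v \<longrightarrow>
        set_lebesgue_integral lborel Xspace
          (\<lambda>p. - u p * Lap v p - exp (-2 * u p) * (cmod (poly P (zcoord p)))\<^sup>2 * v p) \<ge> 0))"

definition fC :: "real \<Rightarrow> real \<Rightarrow> real" where
  "fC C y = (if y \<le> C then 0 else y - C * ln (y / C) - C)"

end

theory Submission
  imports Defs
begin

text \<open>
  Since y is harmonic and exp (-2 y) \<le> 1 on X, the function u0 + y is a classical, hence weak,
  supersolution. The function f_C is C^1 with f_C(C) = f_C'(C) = 0; its second derivative is C / y^2
  for y > C and 0 for y < C. Integrating by parts twice along coordinate lines and applying Fubini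
  gives \<integral>_X f_C(y) \<Delta>v = \<integral>_X f_C''(y) v, as well as Green's identity \<integral>_X u0 \<Delta>v = \<integral>_X (\<Delta>u0) v,
  for every test function v. The weak form of (*) for u0 + f_C therefore has the integrand
  (exp (-2 u0) |P|^2 - exp (-2 (u0 + f_C)) |P|^2 - f_C'') v, which is non-positive: it vanishes for
  y < C, and for y \<ge> C the bound y^2 exp (-2 u0) |P|^2 \<le> K_0 \<le> C says exactly that
  exp (-2 u0) |P|^2 \<le> f_C''.
\<close>

section \<open>Directional derivatives and the Laplacian\<close>

lemma Basis_real3: "(Basis :: (real \<times> real \<times> real) set) = {(1,0,0), (0,1,0), (0,0,1)}"
  by (auto simp: Basis_prod_def zero_prod_def)

lemma has_real_derivative_along_line:
  fixes f :: "'a::real_normed_vector \<Rightarrow> real"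
  assumes "(f has_derivative D) (at (q + t *\<^sub>R e))"
  shows "((\<lambda>s. f (q + s *\<^sub>R e)) has_real_derivative D e) (at t)"
proof -
  have "((\<lambda>s. q + s *\<^sub>R e) has_derivative (\<lambda>h. h *\<^sub>R e)) (at t)"
    by (intro derivative_eq_intros) auto
  from has_derivative_compose[OF this assms]
  have "((\<lambda>s. f (q + s *\<^sub>R e)) has_derivative (\<lambda>h. D (h *\<^sub>R e))) (at t)" .
  moreover have "(\<lambda>h. D (h *\<^sub>R e)) = (*) (D e)"
    using has_derivative_bounded_linear[OF assms] by (auto simp: fun_eq_iff linear_simps(5))
  ultimately show ?thesis by (simp add: has_field_derivative_def)
qed

lemma pderiv_dir_eq:
  assumes "(f has_derivative D) (at x)"
  shows "pderiv_dir e f x = D e"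
  unfolding pderiv_dir_def
  by (rule DERIV_imp_deriv, rule has_real_derivative_along_line) (use assms in simp)

lemma has_real_derivative_pderiv_dir:
  fixes f :: "real \<times> real \<times> real \<Rightarrow> real"
  assumes "f differentiable (at (q + t *\<^sub>R e))"
  shows "((\<lambda>s. f (q + s *\<^sub>R e)) has_real_derivative pderiv_dir e f (q + t *\<^sub>R e)) (at t)"
proof -
  obtain D where "(f has_derivative D) (at (q + t *\<^sub>R e))"
    using assms unfolding differentiable_def by blast
  then show ?thesis using has_real_derivative_along_line pderiv_dir_eq by metis
qed

lemma pderiv_dir_add:
  assumes "f differentiable (at x)" "g differentiable (at x)"
  shows "pderiv_dir e (\<lambda>p. f p + g p) x = pderiv_dir e f x + pderiv_dir e g x"
proof -
  obtain D E where D: "(f has_derivative D) (at x)" and E: "(g has_derivative E) (at x)"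
    using assms unfolding differentiable_def by blast
  show ?thesis
    using pderiv_dir_eq[OF has_derivative_add[OF D E]] pderiv_dir_eq[OF D] pderiv_dir_eq[OF E] by simp
qed

lemma pderiv_dir_const [simp]: "pderiv_dir e (\<lambda>_. c) x = 0"
  unfolding pderiv_dir_def by simp

lemma eventually_line_in_open:
  fixes x e :: "'a::real_normed_vector"
  assumes "open S" "x \<in> S"
  shows "eventually (\<lambda>s. x + s *\<^sub>R e \<in> S) (nhds 0)"
proof -
  have "isCont (\<lambda>s::real. x + s *\<^sub>R e) 0"
    by (intro continuous_intros)
  then have "((\<lambda>s::real. x + s *\<^sub>R e) \<longlongrightarrow> x + 0 *\<^sub>R e) (nhds 0)"
    unfolding isCont_def by (rule tendsto_at_iff_tendsto_nhds[THEN iffD1])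
  then show ?thesis using assms by (simp add: topological_tendstoD)
qed

lemma pderiv_dir_cong_open:
  assumes "open S" "x \<in> S" "\<And>y. y \<in> S \<Longrightarrow> f y = g y"
  shows "pderiv_dir e f x = pderiv_dir e g x"
  unfolding pderiv_dir_def
proof (rule deriv_cong_ev[OF _ refl])
  show "\<forall>\<^sub>F s in nhds 0. f (x + s *\<^sub>R e) = g (x + s *\<^sub>R e)"
    using eventually_line_in_open[OF assms(1,2), of e] by eventually_elim (use assms(3) in auto)
qed

lemma pderiv_dir_eq_0_outside:
  assumes "closed K" "\<And>p. p \<notin> K \<Longrightarrow> f p = 0" "p \<notin> K"
  shows "pderiv_dir e f p = 0"
  using pderiv_dir_cong_open[of "- K" p f "\<lambda>_. 0" e] assms by auto

lemma Ck_on_cong: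
  assumes "open S" "\<And>y. y \<in> S \<Longrightarrow> f y = g y" "Ck_on k S f"
  shows "Ck_on k S g"
  using assms(2,3)
proof (induction k arbitrary: f g)
  case 0
  then show ?case using continuous_on_eq by (metis Ck_on.simps(1))
next
  case (Suc k f g)
  have "g differentiable (at x)" if "x \<in> S" for x
  proof -
    have "f differentiable (at x)"
      using Suc.prems(2) that by simp
    then obtain D where "(f has_derivative D) (at x)"
      unfolding differentiable_def by blast
    then have "(g has_derivative D) (at x)"
      by (rule has_derivative_transform_within_open[OF _ assms(1) that]) (use Suc.prems(1) in auto)
    then show ?thesis unfolding differentiable_def by blast
  qed
  moreover have "Ck_on k S (pderiv_dir i g)" if "i \<in> Basis" for i
  proof (rule Suc.IH[rotated])
    show "Ck_on k S (pderiv_dir i f)" using Suc.prems that by auto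
    show "\<And>y. y \<in> S \<Longrightarrow> pderiv_dir i f y = pderiv_dir i g y"
      by (rule pderiv_dir_cong_open[OF assms(1)]) (use Suc.prems(1) in auto)
  qed
  moreover have "continuous_on S g"
    using Suc.prems continuous_on_eq by (metis Ck_on.simps(2))
  ultimately show ?case by simp
qed

lemma Ck_on_const: "Ck_on k S (\<lambda>_. c)"
proof (induction k arbitrary: c)
  case (Suc k)
  have "pderiv_dir i (\<lambda>_. c) = (\<lambda>_. 0)" for i by (simp add: fun_eq_iff)
  then show ?case using Suc by simp
qed simp

lemma Ck_on_add:
  assumes "open S"
  shows "Ck_on k S f \<Longrightarrow> Ck_on k S g \<Longrightarrow> Ck_on k S (\<lambda>x. f x + g x)"
proof (induction k arbitrary: f g)
  case 0
  then show ?case by (simp add: continuous_on_add)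
next
  case (Suc k f g)
  have "Ck_on k S (pderiv_dir i (\<lambda>x. f x + g x))" if "i \<in> Basis" for i
  proof (rule Ck_on_cong[OF assms])
    show "Ck_on k S (\<lambda>x. pderiv_dir i f x + pderiv_dir i g x)"
      using Suc that by simp
    show "pderiv_dir i f y + pderiv_dir i g y = pderiv_dir i (\<lambda>x. f x + g x) y" if "y \<in> S" for y
      using pderiv_dir_add[of f y g i] Suc.prems that by simp
  qed
  then show ?case using Suc.prems by (simp add: continuous_on_add differentiable_add)
qed

lemma Ck_on_imp_continuous_on: "Ck_on k S f \<Longrightarrow> continuous_on S f"
  by (cases k) auto

lemma Ck_on_2_D:
  assumes "Ck_on 2 S f" "e \<in> Basis"
  shows "\<And>x. x \<in> S \<Longrightarrow> f differentiable (at x)"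
    "\<And>x. x \<in> S \<Longrightarrow> pderiv_dir e f differentiable (at x)"
    "continuous_on S (pderiv_dir e (pderiv_dir e f))"
proof -
  have "Ck_on (Suc (Suc 0)) S f" using assms(1) by (simp add: numeral_2_eq_2)
  then show "\<And>x. x \<in> S \<Longrightarrow> f differentiable (at x)"
    "\<And>x. x \<in> S \<Longrightarrow> pderiv_dir e f differentiable (at x)"
    "continuous_on S (pderiv_dir e (pderiv_dir e f))"
    using assms(2) unfolding Ck_on.simps by blast+
qed

lemma ycoord_has_derivative: "(ycoord has_derivative ycoord) (at x)"
proof -
  have "bounded_linear ycoord" unfolding ycoord_def
    by (intro bounded_linear_compose[OF bounded_linear_snd] bounded_linear_snd)
  then show ?thesis by (rule bounded_linear_imp_has_derivative)
qed

lemma continuous_on_ycoord: "continuous_on S ycoord"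
  unfolding ycoord_def by (intro continuous_intros)

lemma ycoord_line: "ycoord (q + t *\<^sub>R e) = ycoord q + t * ycoord e"
  by (simp add: ycoord_def)

lemma open_Xspace: "open Xspace"
proof -
  have "Xspace = ycoord -` {0<..}" unfolding Xspace_def by auto
  then show ?thesis
    using continuous_open_vimage[of "{0<..}" ycoord] continuous_on_ycoord
    by (simp add: continuous_on_eq_continuous_within)
qed

lemma pderiv_dir_ycoord: "pderiv_dir e ycoord = (\<lambda>_. ycoord e)"
  using pderiv_dir_eq[OF ycoord_has_derivative] by (simp add: fun_eq_iff)

lemma Ck_on_ycoord: "Ck_on k S ycoord"
proof (cases k)
  case 0
  then show ?thesis by (simp add: continuous_on_ycoord)
next
  case (Suc k')
  have "ycoord differentiable (at x)" for x
    using ycoord_has_derivative unfolding differentiable_def by blast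
  then show ?thesis
    using Suc Ck_on_const by (simp add: pderiv_dir_ycoord continuous_on_ycoord)
qed

lemma Lap_add:
  assumes "open S" "Ck_on 2 S f" "Ck_on 2 S g" "p \<in> S"
  shows "Lap (\<lambda>q. f q + g q) p = Lap f p + Lap g p"
  unfolding Lap_def sum.distrib[symmetric]
proof (rule sum.cong[OF refl])
  fix i :: "real \<times> real \<times> real" assume i: "i \<in> Basis"
  note f = Ck_on_2_D[OF assms(2) i] and g = Ck_on_2_D[OF assms(3) i]
  have "pderiv_dir i (pderiv_dir i (\<lambda>q. f q + g q)) p
      = pderiv_dir i (\<lambda>q. pderiv_dir i f q + pderiv_dir i g q) p"
    by (rule pderiv_dir_cong_open[OF assms(1,4)]) (simp add: pderiv_dir_add f(1) g(1))
  also have "\<dots> = pderiv_dir i (pderiv_dir i f) p + pderiv_dir i (pderiv_dir i g) p"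
    by (rule pderiv_dir_add) (use f(2) g(2) assms(4) in auto)
  finally show "pderiv_dir i (pderiv_dir i (\<lambda>q. f q + g q)) p
      = pderiv_dir i (pderiv_dir i f) p + pderiv_dir i (pderiv_dir i g) p" .
qed

lemma Lap_ycoord: "Lap ycoord p = 0"
  by (simp add: Lap_def pderiv_dir_ycoord)

lemma Lap_add_ycoord: "Ck_on 2 Xspace u \<Longrightarrow> p \<in> Xspace \<Longrightarrow> Lap (\<lambda>q. u q + ycoord q) p = Lap u p"
  using Lap_add[OF open_Xspace _ Ck_on_ycoord] Lap_ycoord by simp

section \<open>Integrals over the half-space along coordinate lines\<close>

lemma line_meets_compact_in_interval:
  fixes q e :: "real \<times> real \<times> real"
  assumes K: "compact K" "K \<subseteq> Xspace" and e: "e \<in> Basis" and t0: "q + t0 *\<^sub>R e \<in> K"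
  obtains a b where "a \<le> b" "\<And>t. t \<in> {a..b} \<Longrightarrow> q + t *\<^sub>R e \<in> Xspace"
    "\<And>t. t \<notin> {a<..<b} \<Longrightarrow> q + t *\<^sub>R e \<notin> K"
proof -
  define T where "T = {t. q + t *\<^sub>R e \<in> K}"
  have "closed T" unfolding T_def
    using continuous_closed_vimage[OF compact_imp_closed[OF K(1)], of "\<lambda>t. q + t *\<^sub>R e"]
    by (auto intro: continuous_intros simp: vimage_def)
  have "T \<subseteq> (\<lambda>p. (p - q) \<bullet> e) ` K"
    using e by (force simp: T_def inner_Basis)
  moreover have "compact ((\<lambda>p. (p - q) \<bullet> e) ` K)"
    by (intro compact_continuous_image continuous_intros K(1))
  ultimately have "compact T"
    using \<open>closed T\<close> by (meson bounded_subset compact_eq_bounded_closed)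
  moreover have "T \<noteq> {}" using t0 T_def by auto
  ultimately obtain a0 b0 where a0: "a0 \<in> T" "\<And>t. t \<in> T \<Longrightarrow> a0 \<le> t"
    and b0: "\<And>t. t \<in> T \<Longrightarrow> t \<le> b0"
    using compact_attains_inf compact_attains_sup by metis
  define y0 where "y0 = ycoord (q + a0 *\<^sub>R e)"
  have "y0 > 0" using a0(1) K(2) unfolding T_def y0_def Xspace_def by auto
  have "ycoord e = 0 \<or> ycoord e = 1" using e unfolding Basis_real3 by (auto simp: ycoord_def)
  \<comment> \<open>Widening \<open>[a0, b0]\<close> downwards by only \<open>y0 / 2\<close> keeps it inside \<open>X\<close> also for vertical \<open>e\<close>.\<close>
  show thesis
  proof
    show "a0 - y0 / 2 \<le> b0 + 1" using a0 b0 \<open>y0 > 0\<close> by force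
    show "q + t *\<^sub>R e \<in> Xspace" if "t \<in> {a0 - y0 / 2..b0 + 1}" for t
      using \<open>ycoord e = 0 \<or> ycoord e = 1\<close> \<open>y0 > 0\<close> that
      by (auto simp: Xspace_def y0_def ycoord_line field_simps)
    show "q + t *\<^sub>R e \<notin> K" if "t \<notin> {a0 - y0 / 2<..<b0 + 1}" for t
      using that a0(2)[of t] b0[of t] \<open>y0 > 0\<close> by (force simp: T_def)
  qed
qed

lemma lborel_integral_eq_by_fst_fibres:
  fixes A B :: "'a::euclidean_space \<times> 'b::euclidean_space \<Rightarrow> real"
  assumes "integrable lborel A" "integrable lborel B"
    and "\<And>y. (LINT x|lborel. A (x, y)) = (LINT x|lborel. B (x, y))"
  shows "integral\<^sup>L lborel A = integral\<^sup>L lborel B"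
proof -
  have "integral\<^sup>L lborel F = (LINT y|lborel. LINT x|lborel. F (x, y))" if "integrable lborel F"
    for F :: "'a \<times> 'b \<Rightarrow> real"
    using lborel_pair.integral_snd[of "\<lambda>x y. F (x, y)"] that by (simp add: lborel_prod)
  then show ?thesis using assms by simp
qed

lemma lborel_integral_eq_by_snd_fibres:
  fixes A B :: "'a::euclidean_space \<times> 'b::euclidean_space \<Rightarrow> real"
  assumes A: "integrable lborel A" and B: "integrable lborel B"
    and fibres: "\<And>x. integrable lborel (\<lambda>y. A (x, y)) \<Longrightarrow> integrable lborel (\<lambda>y. B (x, y)) \<Longrightarrow>
      (LINT y|lborel. A (x, y)) = (LINT y|lborel. B (x, y))"
  shows "integral\<^sup>L lborel A = integral\<^sup>L lborel B"
proof -
  have prod: "integrable (lborel \<Otimes>\<^sub>M lborel) F" if "integrable lborel F" for F :: "'a \<times> 'b \<Rightarrow> real"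
    using that by (simp add: lborel_prod)
  have "AE x in lborel. (LINT y|lborel. A (x, y)) = (LINT y|lborel. B (x, y))"
    using lborel_pair.AE_integrable_fst'[OF prod[OF A]] lborel_pair.AE_integrable_fst'[OF prod[OF B]]
    by eventually_elim (rule fibres)
  then have "(LINT x|lborel. LINT y|lborel. A (x, y)) = (LINT x|lborel. LINT y|lborel. B (x, y))"
    using A B by (intro integral_cong_AE) (auto simp: lborel_prod[symmetric])
  then show ?thesis
    using lborel_pair.integral_fst'[OF prod[OF A]] lborel_pair.integral_fst'[OF prod[OF B]]
    by (simp add: lborel_prod)
qed

lemma lborel_integral_eq_by_lines:
  fixes A B :: "real \<times> real \<times> real \<Rightarrow> real"
  assumes e: "e \<in> Basis" and A: "integrable lborel A" and B: "integrable lborel B"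
    and lines: "\<And>q. (LBINT t. A (q + t *\<^sub>R e)) = (LBINT t. B (q + t *\<^sub>R e))"
  shows "integral\<^sup>L lborel A = integral\<^sup>L lborel B"
  using e unfolding Basis_real3
proof (elim insertE emptyE)
  assume "e = (1, 0, 0)"
  then have "(LBINT x. A (x, r)) = (LBINT x. B (x, r))" for r
    using lines[of "(0, r)"]
    by (simp add: zero_prod_def[symmetric] prod_eq_iff[of "_ + _" "(t, r)"])
  then show ?thesis using lborel_integral_eq_by_fst_fibres[OF A B] by simp
next
  assume "e = (0, 1, 0)"
  then have "(LBINT t. A (x, t, y)) = (LBINT t. B (x, t, y))" for x y
    using lines[of "(x, 0, y)"]
    by (simp add: zero_prod_def[symmetric] prod_eq_iff[of "_ + _" "(x, t, y)"])
  then show ?thesis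
    by (intro lborel_integral_eq_by_snd_fibres[OF A B] lborel_integral_eq_by_fst_fibres) simp_all
next
  assume "e = (0, 0, 1)"
  then have "(LBINT t. A (x, y, t)) = (LBINT t. B (x, y, t))" for x y
    using lines[of "(x, y, 0)"]
    by (simp add: zero_prod_def[symmetric] prod_eq_iff[of "_ + _" "(x, y, t)"])
  then show ?thesis
    by (intro lborel_integral_eq_by_snd_fibres[OF A B] lborel_integral_eq_by_snd_fibres) simp_all
qed

section \<open>Integration by parts against test functions\<close>

lemma integral_by_parts_twice:
  fixes \<phi> \<phi>1 \<phi>2 \<psi> \<psi>1 \<psi>2 :: "real \<Rightarrow> real"
  assumes "a \<le> b"
    and \<phi>: "\<And>t. t \<in> {a..b} \<Longrightarrow> (\<phi> has_real_derivative \<phi>1 t) (at t within {a..b})"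
      "\<And>t. t \<in> {a..b} \<Longrightarrow> (\<phi>1 has_real_derivative \<phi>2 t) (at t within {a..b})"
    and \<psi>: "\<And>t. t \<in> {a..b} \<Longrightarrow> (\<psi> has_real_derivative \<psi>1 t) (at t within {a..b})"
      "\<And>t. t \<in> {a..b} \<Longrightarrow> (\<psi>1 has_real_derivative \<psi>2 t) (at t within {a..b})"
    and "continuous_on {a..b} \<phi>2" "continuous_on {a..b} \<psi>2"
    and boundary: "\<phi> b * \<psi>1 b - \<phi>1 b * \<psi> b = \<phi> a * \<psi>1 a - \<phi>1 a * \<psi> a"
  shows "(LBINT t:{a..b}. \<phi> t * \<psi>2 t) = (LBINT t:{a..b}. \<phi>2 t * \<psi> t)"
proof -
  have HK: "(LBINT t:{a..b}. f t) = integral {a..b} f" "f integrable_on {a..b}"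
    if "continuous_on {a..b} f" for f :: "real \<Rightarrow> real"
    using set_borel_integral_eq_integral[of "{a..b}" f] borel_integrable_compact[OF compact_Icc that]
    unfolding set_integrable_def by auto
  have "continuous_on {a..b} \<phi>" "continuous_on {a..b} \<psi>"
    unfolding continuous_on_eq_continuous_within using \<phi>(1) \<psi>(1) DERIV_continuous by blast+
  then have cont: "continuous_on {a..b} (\<lambda>t. \<phi> t * \<psi>2 t)" "continuous_on {a..b} (\<lambda>t. \<phi>2 t * \<psi> t)"
    using assms(6,7) by (auto intro: continuous_intros)
  have "((\<lambda>t. \<phi> t * \<psi>1 t - \<phi>1 t * \<psi> t) has_vector_derivative (\<phi> t * \<psi>2 t - \<phi>2 t * \<psi> t))
      (at t within {a..b})" if "t \<in> {a..b}" for t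
  proof -
    have "((\<lambda>t. \<phi> t * \<psi>1 t - \<phi>1 t * \<psi> t) has_real_derivative
        (\<phi>1 t * \<psi>1 t + \<psi>2 t * \<phi> t) - (\<phi>2 t * \<psi> t + \<psi>1 t * \<phi>1 t)) (at t within {a..b})"
      using that by (intro DERIV_diff DERIV_mult \<phi> \<psi>)
    then show ?thesis
      by (simp add: has_real_derivative_iff_has_vector_derivative[symmetric] algebra_simps)
  qed
  from fundamental_theorem_of_calculus[OF \<open>a \<le> b\<close> this]
  have "integral {a..b} (\<lambda>t. \<phi> t * \<psi>2 t - \<phi>2 t * \<psi> t) = 0"
    using boundary by (simp add: integral_unique)
  then show ?thesis
    using integral_diff[OF HK(2)[OF cont(1)] HK(2)[OF cont(2)]] HK(1)[OF cont(1)] HK(1)[OF cont(2)]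
    by simp
qed

lemma set_integrable_mult_vanishing_outside:
  fixes h \<phi> :: "'a::euclidean_space \<Rightarrow> real"
  assumes "compact K" "K \<subseteq> S" "continuous_on S h" "continuous_on UNIV \<phi>"
    and "\<And>p. p \<notin> K \<Longrightarrow> \<phi> p = 0"
  shows "set_integrable lborel S (\<lambda>p. h p * \<phi> p)"
proof -
  have "(\<lambda>p. indicator S p *\<^sub>R (h p * \<phi> p)) = (\<lambda>p. indicator K p *\<^sub>R (h p * \<phi> p))"
    using assms(2,5) by (auto simp: fun_eq_iff indicator_def)
  moreover have "continuous_on K (\<lambda>p. h p * \<phi> p)"
    using assms(2-4) by (intro continuous_intros) (auto elim: continuous_on_subset)
  ultimately show ?thesis
    unfolding set_integrable_def using borel_integrable_compact[OF assms(1)] by metis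
qed

lemma has_real_derivative_line_shift:
  fixes G :: "'a::real_normed_vector \<Rightarrow> real"
  assumes "((\<lambda>s. G ((q + t *\<^sub>R e) + s *\<^sub>R e)) has_real_derivative D) (at 0)"
  shows "((\<lambda>s. G (q + s *\<^sub>R e)) has_real_derivative D) (at t)"
proof -
  have "(\<lambda>s. G ((q + t *\<^sub>R e) + s *\<^sub>R e)) = (\<lambda>s. G (q + (s + t) *\<^sub>R e))"
    by (simp add: fun_eq_iff algebra_simps)
  then show ?thesis
    using assms DERIV_shift[of "\<lambda>s. G (q + s *\<^sub>R e)" D 0 t] by simp
qed

lemma set_integral_Lap_by_parts:
  fixes F v :: "real \<times> real \<times> real \<Rightarrow> real" and H :: "real \<times> real \<times> real \<Rightarrow> real \<times> real \<times> real \<Rightarrow> real"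
  assumes int_F: "\<And>i. i \<in> Basis \<Longrightarrow> set_integrable lborel S (\<lambda>p. F p * pderiv_dir i (pderiv_dir i v) p)"
    and int_H: "\<And>i. i \<in> Basis \<Longrightarrow> set_integrable lborel S (\<lambda>p. H i p * v p)"
    and eq: "\<And>i. i \<in> Basis \<Longrightarrow>
      (LINT p:S|lborel. F p * pderiv_dir i (pderiv_dir i v) p) = (LINT p:S|lborel. H i p * v p)"
  shows "set_integrable lborel S (\<lambda>p. F p * Lap v p)"
    and "set_integrable lborel S (\<lambda>p. (\<Sum>i\<in>Basis. H i p) * v p)"
    and "(LINT p:S|lborel. F p * Lap v p) = (LINT p:S|lborel. (\<Sum>i\<in>Basis. H i p) * v p)"
proof -
  have F: "(\<lambda>p. indicator S p *\<^sub>R (F p * Lap v p))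
      = (\<lambda>p. \<Sum>i\<in>Basis. indicator S p *\<^sub>R (F p * pderiv_dir i (pderiv_dir i v) p))"
    by (simp add: fun_eq_iff Lap_def sum_distrib_left)
  have H: "(\<lambda>p. indicator S p *\<^sub>R ((\<Sum>i\<in>Basis. H i p) * v p))
      = (\<lambda>p. \<Sum>i\<in>Basis. indicator S p *\<^sub>R (H i p * v p))"
    by (simp add: fun_eq_iff sum_distrib_left sum_distrib_right)
  show "set_integrable lborel S (\<lambda>p. F p * Lap v p)"
    unfolding set_integrable_def F
    by (intro Bochner_Integration.integrable_sum) (use int_F in \<open>simp add: set_integrable_def\<close>)
  show "set_integrable lborel S (\<lambda>p. (\<Sum>i\<in>Basis. H i p) * v p)"
    unfolding set_integrable_def H
    by (intro Bochner_Integration.integrable_sum) (use int_H in \<open>simp add: set_integrable_def\<close>)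
  have "(LINT p:S|lborel. F p * Lap v p)
      = (\<Sum>i\<in>Basis. LINT p:S|lborel. F p * pderiv_dir i (pderiv_dir i v) p)"
    unfolding set_lebesgue_integral_def F
    by (rule Bochner_Integration.integral_sum) (use int_F in \<open>simp add: set_integrable_def\<close>)
  also have "\<dots> = (\<Sum>i\<in>Basis. LINT p:S|lborel. H i p * v p)"
    using eq by simp
  also have "\<dots> = (LINT p:S|lborel. (\<Sum>i\<in>Basis. H i p) * v p)"
    unfolding set_lebesgue_integral_def H
    by (rule Bochner_Integration.integral_sum[symmetric]) (use int_H in \<open>simp add: set_integrable_def\<close>)
  finally show "(LINT p:S|lborel. F p * Lap v p) = (LINT p:S|lborel. (\<Sum>i\<in>Basis. H i p) * v p)" .
qed

locale C2_test_function =
  fixes K :: "(real \<times> real \<times> real) set" and v :: "real \<times> real \<times> real \<Rightarrow> real"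
  assumes compact_support: "compact K" and support_in_Xspace: "K \<subseteq> Xspace"
    and vanishes_outside: "\<And>p. p \<notin> K \<Longrightarrow> v p = 0"
    and C2: "Ck_on 2 UNIV v"
begin

lemma pderiv_vanishes_outside:
  assumes "p \<notin> K"
  shows "pderiv_dir e v p = 0" "pderiv_dir e (pderiv_dir e v) p = 0"
proof -
  have "closed K" using compact_support by (rule compact_imp_closed)
  then have "\<And>p. p \<notin> K \<Longrightarrow> pderiv_dir e v p = 0"
    using pderiv_dir_eq_0_outside vanishes_outside by blast
  then show "pderiv_dir e v p = 0" "pderiv_dir e (pderiv_dir e v) p = 0"
    using pderiv_dir_eq_0_outside[OF \<open>closed K\<close>] assms by blast+
qed

lemma set_integral_eq_by_interval_integrals:
  fixes G H :: "real \<times> real \<times> real \<Rightarrow> real"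
  assumes e: "e \<in> Basis"
    and int_G: "set_integrable lborel Xspace (\<lambda>p. G p * pderiv_dir e (pderiv_dir e v) p)"
    and int_H: "set_integrable lborel Xspace (\<lambda>p. H p * v p)"
    and interval: "\<And>q a b. a \<le> b \<Longrightarrow> (\<And>t. t \<in> {a..b} \<Longrightarrow> q + t *\<^sub>R e \<in> Xspace) \<Longrightarrow>
      (\<And>t. t \<notin> {a<..<b} \<Longrightarrow> q + t *\<^sub>R e \<notin> K) \<Longrightarrow>
      (LBINT t:{a..b}. G (q + t *\<^sub>R e) * pderiv_dir e (pderiv_dir e v) (q + t *\<^sub>R e))
        = (LBINT t:{a..b}. H (q + t *\<^sub>R e) * v (q + t *\<^sub>R e))"
  shows "(LINT p:Xspace|lborel. G p * pderiv_dir e (pderiv_dir e v) p)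
       = (LINT p:Xspace|lborel. H p * v p)"
  using int_G int_H unfolding set_integrable_def set_lebesgue_integral_def real_scaleR_def
proof (rule lborel_integral_eq_by_lines[OF e])
  fix q
  show "(LBINT t. indicator Xspace (q + t *\<^sub>R e) *
            (G (q + t *\<^sub>R e) * pderiv_dir e (pderiv_dir e v) (q + t *\<^sub>R e)))
      = (LBINT t. indicator Xspace (q + t *\<^sub>R e) * (H (q + t *\<^sub>R e) * v (q + t *\<^sub>R e)))"
  proof (cases "\<exists>t0. q + t0 *\<^sub>R e \<in> K")
    case False
    then show ?thesis using vanishes_outside pderiv_vanishes_outside by simp
  next
    case True
    then obtain a b where "a \<le> b" and in_X: "\<And>t. t \<in> {a..b} \<Longrightarrow> q + t *\<^sub>R e \<in> Xspace"
      and off_K: "\<And>t. t \<notin> {a<..<b} \<Longrightarrow> q + t *\<^sub>R e \<notin> K"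
      using line_meets_compact_in_interval[OF compact_support support_in_Xspace e] by metis
    have lhs: "indicator Xspace (q + t *\<^sub>R e) *
          (G (q + t *\<^sub>R e) * pderiv_dir e (pderiv_dir e v) (q + t *\<^sub>R e))
        = indicator {a..b} t * (G (q + t *\<^sub>R e) * pderiv_dir e (pderiv_dir e v) (q + t *\<^sub>R e))" for t
      using in_X[of t] off_K[of t] by (cases "t \<in> {a<..<b}") (auto simp: pderiv_vanishes_outside)
    have rhs: "indicator Xspace (q + t *\<^sub>R e) * (H (q + t *\<^sub>R e) * v (q + t *\<^sub>R e))
        = indicator {a..b} t * (H (q + t *\<^sub>R e) * v (q + t *\<^sub>R e))" for t
      using in_X[of t] off_K[of t] by (cases "t \<in> {a<..<b}") (auto simp: vanishes_outside)
    show ?thesis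
      using interval[OF \<open>a \<le> b\<close> in_X off_K]
      unfolding set_lebesgue_integral_def real_scaleR_def lhs rhs .
  qed
qed

lemma set_integrable_mult_v:
  assumes "continuous_on Xspace h"
  shows "set_integrable lborel Xspace (\<lambda>p. h p * v p)"
  using set_integrable_mult_vanishing_outside[OF compact_support support_in_Xspace assms]
    Ck_on_imp_continuous_on[OF C2] vanishes_outside by blast

lemma set_integrable_mult_pderiv2:
  assumes "continuous_on Xspace h" "e \<in> Basis"
  shows "set_integrable lborel Xspace (\<lambda>p. h p * pderiv_dir e (pderiv_dir e v) p)"
  using set_integrable_mult_vanishing_outside[OF compact_support support_in_Xspace assms(1)]
    Ck_on_2_D(3)[OF C2 assms(2)] pderiv_vanishes_outside by blast

lemma set_integral_by_parts:
  fixes F F1 F2 :: "real \<times> real \<times> real \<Rightarrow> real"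
  assumes e: "e \<in> Basis"
    and F1: "\<And>x. x \<in> Xspace \<Longrightarrow> ((\<lambda>s. F (x + s *\<^sub>R e)) has_real_derivative F1 x) (at 0)"
    and F2: "\<And>x. x \<in> Xspace \<Longrightarrow> ((\<lambda>s. F1 (x + s *\<^sub>R e)) has_real_derivative F2 x) (at 0)"
    and cont_F: "continuous_on Xspace F" and cont_F2: "continuous_on Xspace F2"
  shows "set_integrable lborel Xspace (\<lambda>p. F p * pderiv_dir e (pderiv_dir e v) p)"
    and "set_integrable lborel Xspace (\<lambda>p. F2 p * v p)"
    and "(LINT p:Xspace|lborel. F p * pderiv_dir e (pderiv_dir e v) p)
       = (LINT p:Xspace|lborel. F2 p * v p)"
proof -
  note C2_v = Ck_on_2_D[OF C2 e]
  show int_F: "set_integrable lborel Xspace (\<lambda>p. F p * pderiv_dir e (pderiv_dir e v) p)"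
    by (rule set_integrable_mult_pderiv2[OF cont_F e])
  show int_F2: "set_integrable lborel Xspace (\<lambda>p. F2 p * v p)"
    by (rule set_integrable_mult_v[OF cont_F2])
  show "(LINT p:Xspace|lborel. F p * pderiv_dir e (pderiv_dir e v) p)
      = (LINT p:Xspace|lborel. F2 p * v p)"
  proof (rule set_integral_eq_by_interval_integrals[OF e int_F int_F2])
    fix q a b assume "a \<le> b" and in_X: "\<And>t. t \<in> {a..b} \<Longrightarrow> q + t *\<^sub>R e \<in> Xspace"
      and off_K: "\<And>t. t \<notin> {a<..<b} \<Longrightarrow> q + t *\<^sub>R e \<notin> K"
    show "(LBINT t:{a..b}. F (q + t *\<^sub>R e) * pderiv_dir e (pderiv_dir e v) (q + t *\<^sub>R e))
        = (LBINT t:{a..b}. F2 (q + t *\<^sub>R e) * v (q + t *\<^sub>R e))"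
    proof (rule integral_by_parts_twice[OF \<open>a \<le> b\<close>])
      fix t assume "t \<in> {a..b}"
      then have "q + t *\<^sub>R e \<in> Xspace" by (rule in_X)
      then show "((\<lambda>t. F (q + t *\<^sub>R e)) has_real_derivative F1 (q + t *\<^sub>R e)) (at t within {a..b})"
        "((\<lambda>t. F1 (q + t *\<^sub>R e)) has_real_derivative F2 (q + t *\<^sub>R e)) (at t within {a..b})"
        by (auto intro!: has_field_derivative_at_within has_real_derivative_line_shift F1 F2)
      show "((\<lambda>t. v (q + t *\<^sub>R e)) has_real_derivative pderiv_dir e v (q + t *\<^sub>R e))
          (at t within {a..b})"
        "((\<lambda>t. pderiv_dir e v (q + t *\<^sub>R e)) has_real_derivative
            pderiv_dir e (pderiv_dir e v) (q + t *\<^sub>R e)) (at t within {a..b})"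
        by (auto intro!: has_field_derivative_at_within has_real_derivative_pderiv_dir C2_v)
    next
      show "continuous_on {a..b} (\<lambda>t. F2 (q + t *\<^sub>R e))"
        by (rule continuous_on_compose2[OF cont_F2]) (auto intro!: continuous_intros in_X)
      show "continuous_on {a..b} (\<lambda>t. pderiv_dir e (pderiv_dir e v) (q + t *\<^sub>R e))"
        by (rule continuous_on_compose2[OF C2_v(3)]) (auto intro!: continuous_intros)
      have "q + a *\<^sub>R e \<notin> K" "q + b *\<^sub>R e \<notin> K" using off_K[of a] off_K[of b] by auto
      then show "F (q + b *\<^sub>R e) * pderiv_dir e v (q + b *\<^sub>R e) - F1 (q + b *\<^sub>R e) * v (q + b *\<^sub>R e)
        = F (q + a *\<^sub>R e) * pderiv_dir e v (q + a *\<^sub>R e) - F1 (q + a *\<^sub>R e) * v (q + a *\<^sub>R e)"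
        by (simp add: vanishes_outside pderiv_vanishes_outside)
    qed
  qed
qed

lemma green_identity:
  assumes "Ck_on 2 Xspace F"
  shows "set_integrable lborel Xspace (\<lambda>p. F p * Lap v p)"
    and "set_integrable lborel Xspace (\<lambda>p. Lap F p * v p)"
    and "(LINT p:Xspace|lborel. F p * Lap v p) = (LINT p:Xspace|lborel. Lap F p * v p)"
proof -
  have "set_integrable lborel Xspace (\<lambda>p. F p * pderiv_dir e (pderiv_dir e v) p)
      \<and> set_integrable lborel Xspace (\<lambda>p. pderiv_dir e (pderiv_dir e F) p * v p)
      \<and> (LINT p:Xspace|lborel. F p * pderiv_dir e (pderiv_dir e v) p)
        = (LINT p:Xspace|lborel. pderiv_dir e (pderiv_dir e F) p * v p)" if e: "e \<in> Basis" for e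
  proof -
    note C2_F = Ck_on_2_D[OF assms e]
    have "((\<lambda>s. F (x + s *\<^sub>R e)) has_real_derivative pderiv_dir e F x) (at 0)"
      "((\<lambda>s. pderiv_dir e F (x + s *\<^sub>R e)) has_real_derivative pderiv_dir e (pderiv_dir e F) x) (at 0)"
      if "x \<in> Xspace" for x
      using has_real_derivative_pderiv_dir[of _ x 0 e] C2_F(1,2)[OF that] by simp_all
    with set_integral_by_parts[OF e _ _ Ck_on_imp_continuous_on[OF assms] C2_F(3)] show ?thesis by blast
  qed
  then show "set_integrable lborel Xspace (\<lambda>p. F p * Lap v p)"
    "set_integrable lborel Xspace (\<lambda>p. Lap F p * v p)"
    "(LINT p:Xspace|lborel. F p * Lap v p) = (LINT p:Xspace|lborel. Lap F p * v p)"
    using set_integral_Lap_by_parts[of Xspace F v "\<lambda>i. pderiv_dir i (pderiv_dir i F)"]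
    unfolding Lap_def[of F, symmetric] by blast+
qed

end

section \<open>The comparison function \<open>f\<^sub>C\<close>\<close>

text \<open>\<open>fC C\<close> is \<open>C\<^sup>1\<close> but not \<open>C\<^sup>2\<close>: its second derivative jumps from \<open>0\<close> to \<open>1 / C\<close> at \<open>y = C\<close>,
  where the value chosen below is immaterial.\<close>

definition fC'' :: "real \<Rightarrow> real \<Rightarrow> real" where
  "fC'' C y = (if y < C then 0 else C / y\<^sup>2)"

lemma fC_eq: "0 < C \<Longrightarrow> C \<le> y \<Longrightarrow> fC C y = y - C * ln (y / C) - C"
  by (cases "y = C") (auto simp: fC_def)

lemma fC_nonneg:
  assumes "0 < C" "0 < y"
  shows "0 \<le> fC C y"
proof (cases "y \<le> C")
  case False
  have "C * ln (y / C) \<le> C * (y / C - 1)"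
    using assms by (intro mult_left_mono ln_le_minus_one) auto
  also have "\<dots> = y - C" using assms by (simp add: field_simps)
  finally show ?thesis using False by (simp add: fC_def)
qed (simp add: fC_def)

lemma fC_le:
  assumes "0 < C" "0 < y"
  shows "fC C y \<le> y"
proof (cases "y \<le> C")
  case False
  then have "0 \<le> C * ln (y / C)" using assms by simp
  moreover have "fC C y = y - C * ln (y / C) - C" using False by (simp add: fC_def)
  ultimately show ?thesis using assms by linarith
qed (use assms in \<open>simp add: fC_def\<close>)

lemma continuous_on_fC: "0 < C \<Longrightarrow> continuous_on {0<..} (fC C)"
  unfolding fC_def[abs_def]
  by (rule continuous_on_cases_le[where h = "\<lambda>y. y"]) (auto intro!: continuous_intros)

lemma continuous_on_fC_ycoord: "0 < C \<Longrightarrow> continuous_on Xspace (\<lambda>p. fC C (ycoord p))"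
  by (rule continuous_on_compose2[OF continuous_on_fC continuous_on_ycoord]) (auto simp: Xspace_def)

lemma fC''_bounds: "0 < C \<Longrightarrow> 0 \<le> fC'' C y \<and> fC'' C y \<le> 1 / C"
  by (auto simp: fC''_def field_simps power2_eq_square intro: mult_mono)

lemma fC_integral_by_parts:
  fixes \<psi> \<psi>1 \<psi>2 :: "real \<Rightarrow> real"
  assumes C: "0 < C" and "a \<le> b" and pos: "\<And>t. t \<in> {a..b} \<Longrightarrow> 0 < c + t"
    and \<psi>: "\<And>t. t \<in> {a..b} \<Longrightarrow> (\<psi> has_real_derivative \<psi>1 t) (at t)"
      "\<And>t. t \<in> {a..b} \<Longrightarrow> (\<psi>1 has_real_derivative \<psi>2 t) (at t)"
    and cont_\<psi>2: "continuous_on {a..b} \<psi>2"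
    and boundary: "\<psi> a = 0" "\<psi>1 a = 0" "\<psi> b = 0" "\<psi>1 b = 0"
  shows "(LBINT t:{a..b}. fC C (c + t) * \<psi>2 t) = (LBINT t:{a..b}. fC'' C (c + t) * \<psi> t)"
proof (cases "C - c \<le> b")
  case False
  then have "fC C (c + t) * \<psi>2 t = 0" "fC'' C (c + t) * \<psi> t = 0" if "t \<in> {a..b}" for t
    using that by (auto simp: fC_def fC''_def)
  then have "(LBINT t:{a..b}. fC C (c + t) * \<psi>2 t) = 0" "(LBINT t:{a..b}. fC'' C (c + t) * \<psi> t) = 0"
    by (auto intro: trans[OF set_lebesgue_integral_cong set_lebesgue_integral_zero])
  then show ?thesis by simp
next
  case True
  define \<alpha> where "\<alpha> = max a (C - c)"
  have "\<alpha> \<le> b" "a \<le> \<alpha>" "C - c \<le> \<alpha>" using True \<open>a \<le> b\<close> by (auto simp: \<alpha>_def)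
  let ?\<phi> = "\<lambda>t. c + t - C * ln ((c + t) / C) - C" and ?\<phi>1 = "\<lambda>t. 1 - C / (c + t)"
    and ?\<phi>2 = "\<lambda>t. C / (c + t)\<^sup>2"
  have pos': "0 < c + t" if "t \<in> {\<alpha>..b}" for t
    using pos that \<open>a \<le> \<alpha>\<close> by auto
  have by_parts: "(LBINT t:{\<alpha>..b}. ?\<phi> t * \<psi>2 t) = (LBINT t:{\<alpha>..b}. ?\<phi>2 t * \<psi> t)"
  proof (rule integral_by_parts_twice[OF \<open>\<alpha> \<le> b\<close>])
    fix t assume t: "t \<in> {\<alpha>..b}"
    have "(?\<phi> has_real_derivative ?\<phi>1 t) (at t)"
      using pos'[OF t] C by (auto intro!: derivative_eq_intros simp: field_simps)
    moreover have "(?\<phi>1 has_real_derivative ?\<phi>2 t) (at t)"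
      using pos'[OF t] by (auto intro!: derivative_eq_intros simp: field_simps power2_eq_square)
    ultimately show "(?\<phi> has_real_derivative ?\<phi>1 t) (at t within {\<alpha>..b})"
      "(?\<phi>1 has_real_derivative ?\<phi>2 t) (at t within {\<alpha>..b})"
      by (auto intro: has_field_derivative_at_within)
    show "(\<psi> has_real_derivative \<psi>1 t) (at t within {\<alpha>..b})"
      "(\<psi>1 has_real_derivative \<psi>2 t) (at t within {\<alpha>..b})"
      using t \<open>a \<le> \<alpha>\<close> by (auto intro!: has_field_derivative_at_within \<psi>)
  next
    show "continuous_on {\<alpha>..b} ?\<phi>2"
      by (intro continuous_intros) (use pos' in force)
    show "continuous_on {\<alpha>..b} \<psi>2"
      using cont_\<psi>2 by (rule continuous_on_subset) (use \<open>a \<le> \<alpha>\<close> in auto)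
    \<comment> \<open>At \<open>\<alpha>\<close> either \<open>\<psi>\<close> or the branch \<open>?\<phi>\<close> of \<open>fC\<close> vanishes to first order.\<close>
    have "?\<phi> \<alpha> * \<psi>1 \<alpha> - ?\<phi>1 \<alpha> * \<psi> \<alpha> = 0"
      using boundary C by (cases "\<alpha> = a") (auto simp: \<alpha>_def)
    then show "?\<phi> b * \<psi>1 b - ?\<phi>1 b * \<psi> b = ?\<phi> \<alpha> * \<psi>1 \<alpha> - ?\<phi>1 \<alpha> * \<psi> \<alpha>"
      using boundary by simp
  qed
  have restrict: "indicator {a..b} t * (fC C (c + t) * \<psi>2 t) = indicator {\<alpha>..b} t * (?\<phi> t * \<psi>2 t)
      \<and> indicator {a..b} t * (fC'' C (c + t) * \<psi> t) = indicator {\<alpha>..b} t * (?\<phi>2 t * \<psi> t)" for t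
  proof (cases "t \<in> {\<alpha>..b}")
    case True
    then have "C \<le> c + t" "t \<in> {a..b}" using \<open>a \<le> \<alpha>\<close> \<open>C - c \<le> \<alpha>\<close> by auto
    then show ?thesis using C True by (simp add: fC_eq fC''_def)
  next
    case False
    then have "t \<notin> {a..b} \<or> c + t < C" by (auto simp: \<alpha>_def)
    then show ?thesis using False by (auto simp: fC_def fC''_def)
  qed
  show ?thesis
    using by_parts unfolding set_lebesgue_integral_def real_scaleR_def restrict[THEN conjunct1]
      restrict[THEN conjunct2] .
qed

context C2_test_function
begin

lemma set_integral_fC_by_parts_horizontal:
  assumes C: "0 < C" and e: "e \<in> Basis" and "ycoord e = 0"
  shows "set_integrable lborel Xspace (\<lambda>p. fC C (ycoord p) * pderiv_dir e (pderiv_dir e v) p)"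
    and "(LINT p:Xspace|lborel. fC C (ycoord p) * pderiv_dir e (pderiv_dir e v) p) = 0"
proof -
  have F1: "((\<lambda>s. fC C (ycoord (x + s *\<^sub>R e))) has_real_derivative 0) (at 0)" for x
    using \<open>ycoord e = 0\<close> by (simp add: ycoord_line)
  have F2: "((\<lambda>s. 0::real) has_real_derivative 0) (at 0)" by simp
  note by_parts = set_integral_by_parts[OF e F1 F2 continuous_on_fC_ycoord[OF C] continuous_on_const]
  then show "set_integrable lborel Xspace (\<lambda>p. fC C (ycoord p) * pderiv_dir e (pderiv_dir e v) p)"
    "(LINT p:Xspace|lborel. fC C (ycoord p) * pderiv_dir e (pderiv_dir e v) p) = 0"
    by simp_all
qed

lemma set_integrable_fC''_mult:
  assumes C: "0 < C"
  shows "set_integrable lborel Xspace (\<lambda>p. fC'' C (ycoord p) * v p)"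
proof (rule set_integrable_bound)
  show "set_integrable lborel Xspace (\<lambda>p. 1 / C * v p)"
    by (rule set_integrable_mult_v[OF continuous_on_const])
  have [measurable]: "fC'' C \<in> borel_measurable borel"
    unfolding fC''_def[abs_def] by measurable
  have [measurable]: "Xspace \<in> sets borel" "ycoord \<in> borel_measurable borel" "v \<in> borel_measurable borel"
    using open_Xspace continuous_on_ycoord Ck_on_imp_continuous_on[OF C2]
    by (auto intro: borel_measurable_continuous_onI)
  show "set_borel_measurable lborel Xspace (\<lambda>p. fC'' C (ycoord p) * v p)"
    unfolding set_borel_measurable_def by measurable
  show "AE p in lborel. p \<in> Xspace \<longrightarrow> norm (fC'' C (ycoord p) * v p) \<le> norm (1 / C * v p)"
  proof (intro AE_I2 impI)
    fix p
    have "fC'' C (ycoord p) * \<bar>v p\<bar> \<le> 1 / C * \<bar>v p\<bar>"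
      using fC''_bounds[OF C] by (intro mult_right_mono) auto
    then show "norm (fC'' C (ycoord p) * v p) \<le> norm (1 / C * v p)"
      using fC''_bounds[OF C, of "ycoord p"] C by (simp add: abs_mult)
  qed
qed

lemma set_integral_fC_by_parts_vertical:
  assumes C: "0 < C"
  defines "e \<equiv> (0, 0, 1) :: real \<times> real \<times> real"
  shows "set_integrable lborel Xspace (\<lambda>p. fC C (ycoord p) * pderiv_dir e (pderiv_dir e v) p)"
    and "(LINT p:Xspace|lborel. fC C (ycoord p) * pderiv_dir e (pderiv_dir e v) p)
       = (LINT p:Xspace|lborel. fC'' C (ycoord p) * v p)"
proof -
  have e: "e \<in> Basis" and line: "\<And>q t. ycoord (q + t *\<^sub>R e) = ycoord q + t"
    by (simp_all add: e_def Basis_real3 ycoord_def)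
  note C2_v = Ck_on_2_D[OF C2 e]
  show int_fC: "set_integrable lborel Xspace (\<lambda>p. fC C (ycoord p) * pderiv_dir e (pderiv_dir e v) p)"
    by (rule set_integrable_mult_pderiv2[OF continuous_on_fC_ycoord[OF C] e])
  show "(LINT p:Xspace|lborel. fC C (ycoord p) * pderiv_dir e (pderiv_dir e v) p)
       = (LINT p:Xspace|lborel. fC'' C (ycoord p) * v p)"
  proof (rule set_integral_eq_by_interval_integrals[OF e int_fC set_integrable_fC''_mult[OF C]])
    fix q a b assume "a \<le> b" and in_X: "\<And>t. t \<in> {a..b} \<Longrightarrow> q + t *\<^sub>R e \<in> Xspace"
      and off_K: "\<And>t. t \<notin> {a<..<b} \<Longrightarrow> q + t *\<^sub>R e \<notin> K"
    have "q + a *\<^sub>R e \<notin> K" "q + b *\<^sub>R e \<notin> K" using off_K[of a] off_K[of b] by auto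
    have "(LBINT t:{a..b}. fC C (ycoord q + t) * pderiv_dir e (pderiv_dir e v) (q + t *\<^sub>R e))
        = (LBINT t:{a..b}. fC'' C (ycoord q + t) * v (q + t *\<^sub>R e))"
    proof (rule fC_integral_by_parts[OF C \<open>a \<le> b\<close>])
      show "0 < ycoord q + t" if "t \<in> {a..b}" for t
        using in_X[OF that] by (simp add: Xspace_def line)
      show "((\<lambda>t. v (q + t *\<^sub>R e)) has_real_derivative pderiv_dir e v (q + t *\<^sub>R e)) (at t)"
        "((\<lambda>t. pderiv_dir e v (q + t *\<^sub>R e)) has_real_derivative
            pderiv_dir e (pderiv_dir e v) (q + t *\<^sub>R e)) (at t)" for t
        by (auto intro!: has_real_derivative_pderiv_dir C2_v)
      show "continuous_on {a..b} (\<lambda>t. pderiv_dir e (pderiv_dir e v) (q + t *\<^sub>R e))"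
        by (rule continuous_on_compose2[OF C2_v(3)]) (auto intro!: continuous_intros)
    qed (use \<open>q + a *\<^sub>R e \<notin> K\<close> \<open>q + b *\<^sub>R e \<notin> K\<close> in
        \<open>simp_all add: vanishes_outside pderiv_vanishes_outside\<close>)
    then show "(LBINT t:{a..b}. fC C (ycoord (q + t *\<^sub>R e)) * pderiv_dir e (pderiv_dir e v) (q + t *\<^sub>R e))
        = (LBINT t:{a..b}. fC'' C (ycoord (q + t *\<^sub>R e)) * v (q + t *\<^sub>R e))"
      by (simp only: line)
  qed
qed

lemma set_integral_fC_Lap:
  assumes C: "0 < C"
  shows "set_integrable lborel Xspace (\<lambda>p. fC C (ycoord p) * Lap v p)"
    and "(LINT p:Xspace|lborel. fC C (ycoord p) * Lap v p)
       = (LINT p:Xspace|lborel. fC'' C (ycoord p) * v p)"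
proof -
  define H where "H i p = ycoord i * fC'' C (ycoord p)" for i p :: "real \<times> real \<times> real"
  have "set_integrable lborel Xspace (\<lambda>p. fC C (ycoord p) * pderiv_dir i (pderiv_dir i v) p)
      \<and> set_integrable lborel Xspace (\<lambda>p. H i p * v p)
      \<and> (LINT p:Xspace|lborel. fC C (ycoord p) * pderiv_dir i (pderiv_dir i v) p)
        = (LINT p:Xspace|lborel. H i p * v p)" if i: "i \<in> Basis" for i
  proof (cases "i = (0, 0, 1)")
    case True
    then show ?thesis
      using set_integral_fC_by_parts_vertical[OF C] set_integrable_fC''_mult[OF C]
      by (simp add: H_def ycoord_def)
  next
    case False
    with i have "ycoord i = 0" by (auto simp: Basis_real3 ycoord_def)
    then show ?thesis
      using set_integral_fC_by_parts_horizontal[OF C i] by (simp add: H_def set_integrable_def)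
  qed
  moreover have "(\<Sum>i\<in>Basis. H i p) = fC'' C (ycoord p)" for p
    by (simp add: H_def Basis_real3 ycoord_def)
  ultimately show "set_integrable lborel Xspace (\<lambda>p. fC C (ycoord p) * Lap v p)"
    "(LINT p:Xspace|lborel. fC C (ycoord p) * Lap v p) = (LINT p:Xspace|lborel. fC'' C (ycoord p) * v p)"
    using set_integral_Lap_by_parts[of Xspace "\<lambda>p. fC C (ycoord p)" v H] by auto
qed

end

section \<open>Sub- and supersolutions\<close>

lemma continuous_on_poly_zcoord: "continuous_on S (\<lambda>p. (cmod (poly P (zcoord p)))\<^sup>2)"
  unfolding zcoord_def Complex_eq by (intro continuous_intros)

lemma test_fun_imp_C2_test_function:
  assumes "test_fun v"
  obtains K where "C2_test_function K v" "\<And>p. 0 \<le> v p"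
  using assms unfolding test_fun_def smooth_on_def C2_test_function_def by blast

lemma (in C2_test_function) weak_form_C2:
  assumes w: "Ck_on 2 Xspace w" and G: "continuous_on Xspace G"
  shows "set_integrable lborel Xspace (\<lambda>p. - w p * Lap v p - G p * v p)"
    and "set_integrable lborel Xspace (\<lambda>p. (- Lap w p - G p) * v p)"
    and "(LINT p:Xspace|lborel. - w p * Lap v p - G p * v p)
       = (LINT p:Xspace|lborel. (- Lap w p - G p) * v p)"
proof -
  note int_G = set_integrable_mult_v[OF G] and green = green_identity[OF w]
  have neg: "set_integrable lborel Xspace (\<lambda>p. - (w p * Lap v p))"
    "set_integrable lborel Xspace (\<lambda>p. - (Lap w p * v p))"
    using set_integrable_mult_right[OF green(1), of "- 1"] set_integrable_mult_right[OF green(2), of "- 1"]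
    by simp_all
  have "(LINT p:Xspace|lborel. - w p * Lap v p - G p * v p)
      = - (LINT p:Xspace|lborel. w p * Lap v p) - (LINT p:Xspace|lborel. G p * v p)"
    using set_integral_diff(2)[OF neg(1) int_G] set_integral_uminus[OF green(1)] by simp
  also have "\<dots> = (LINT p:Xspace|lborel. (- Lap w p - G p) * v p)"
    using set_integral_diff(2)[OF neg(2) int_G] set_integral_uminus[OF green(2)] green(3)
    by (simp add: left_diff_distrib)
  finally show "(LINT p:Xspace|lborel. - w p * Lap v p - G p * v p)
      = (LINT p:Xspace|lborel. (- Lap w p - G p) * v p)" .
  show "set_integrable lborel Xspace (\<lambda>p. - w p * Lap v p - G p * v p)"
    using set_integral_diff(1)[OF neg(1) int_G] by simp
  show "set_integrable lborel Xspace (\<lambda>p. (- Lap w p - G p) * v p)"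
    using set_integral_diff(1)[OF neg(2) int_G] by (simp add: left_diff_distrib)
qed

lemma weak_supersol_if_classical:
  assumes w: "Ck_on 2 Xspace w"
    and super: "\<And>p. p \<in> Xspace \<Longrightarrow> Lap w p + exp (-2 * w p) * (cmod (poly P (zcoord p)))\<^sup>2 \<le> 0"
  shows "weak_supersol P w"
  unfolding weak_supersol_def
proof (intro conjI allI impI)
  show "continuous_on Xspace w" using w by (rule Ck_on_imp_continuous_on)
  fix v assume "test_fun v"
  then obtain K where v: "C2_test_function K v" and v_nonneg: "\<And>p. 0 \<le> v p"
    by (blast elim: test_fun_imp_C2_test_function)
  let ?G = "\<lambda>p. exp (-2 * w p) * (cmod (poly P (zcoord p)))\<^sup>2"
  have "continuous_on Xspace ?G"
    by (intro continuous_intros continuous_on_poly_zcoord Ck_on_imp_continuous_on[OF w])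
  note weak = C2_test_function.weak_form_C2[OF v w this]
  have "(LINT p:Xspace|lborel. 0) \<le> (LINT p:Xspace|lborel. (- Lap w p - ?G p) * v p)"
  proof (rule set_integral_mono[OF _ weak(2)])
    show "set_integrable lborel Xspace (\<lambda>p. 0 :: real)" by (simp add: set_integrable_def)
    fix p assume "p \<in> Xspace"
    then have "0 \<le> - Lap w p - ?G p" using super by fastforce
    then show "0 \<le> (- Lap w p - ?G p) * v p" using v_nonneg by simp
  qed
  then show "0 \<le> (LINT p:Xspace|lborel. - w p * Lap v p - ?G p * v p)"
    using weak(3) by simp
qed

lemma weak_subsol_add_fC:
  assumes u: "Ck_on 2 Xspace u"
    and sol: "\<And>p. p \<in> Xspace \<Longrightarrow> Lap u p + exp (-2 * u p) * (cmod (poly P (zcoord p)))\<^sup>2 = 0"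
    and C: "0 < C"
    and bound: "\<And>p. p \<in> Xspace \<Longrightarrow> (ycoord p)\<^sup>2 * exp (-2 * u p) * (cmod (poly P (zcoord p)))\<^sup>2 \<le> C"
  shows "weak_subsol P (\<lambda>p. u p + fC C (ycoord p))"
  unfolding weak_subsol_def
proof (intro conjI allI impI)
  let ?Q = "\<lambda>p. (cmod (poly P (zcoord p)))\<^sup>2"
  let ?w = "\<lambda>p. u p + fC C (ycoord p)"
  let ?G = "\<lambda>p. exp (-2 * ?w p) * ?Q p"
  show cont_w: "continuous_on Xspace ?w"
    by (intro continuous_intros Ck_on_imp_continuous_on[OF u] continuous_on_fC_ycoord[OF C])
  fix v assume "test_fun v"
  then obtain K where v: "C2_test_function K v" and v_nonneg: "\<And>p. 0 \<le> v p"
    by (blast elim: test_fun_imp_C2_test_function)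
  have "continuous_on Xspace ?G"
    by (intro continuous_intros continuous_on_poly_zcoord cont_w)
  note weak = C2_test_function.weak_form_C2[OF v u this]
    and fC = C2_test_function.set_integral_fC_Lap[OF v C]
    and int_fC'' = C2_test_function.set_integrable_fC''_mult[OF v C]
  have "(LINT p:Xspace|lborel. - ?w p * Lap v p - ?G p * v p)
      = (LINT p:Xspace|lborel. - u p * Lap v p - ?G p * v p)
        - (LINT p:Xspace|lborel. fC C (ycoord p) * Lap v p)"
    using set_integral_diff(2)[OF weak(1) fC(1)] by (simp add: algebra_simps)
  also have "\<dots> = (LINT p:Xspace|lborel. (- Lap u p - ?G p - fC'' C (ycoord p)) * v p)"
    using set_integral_diff(2)[OF weak(2) int_fC''] weak(3) fC(2) by (simp add: algebra_simps)
  also have "\<dots> \<le> (LINT p:Xspace|lborel. 0)"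
  proof (rule set_integral_mono)
    show "set_integrable lborel Xspace (\<lambda>p. (- Lap u p - ?G p - fC'' C (ycoord p)) * v p)"
      using set_integral_diff(1)[OF weak(2) int_fC''] by (simp add: algebra_simps)
    show "set_integrable lborel Xspace (\<lambda>p. 0 :: real)" by (simp add: set_integrable_def)
    fix p assume p: "p \<in> Xspace"
    then have y: "0 < ycoord p" by (simp add: Xspace_def)
    have "exp (-2 * u p) * ?Q p - ?G p - fC'' C (ycoord p) \<le> 0"
    proof (cases "ycoord p < C")
      case True
      then show ?thesis by (simp add: fC''_def fC_def)
    next
      case False
      have "(ycoord p)\<^sup>2 * (exp (-2 * u p) * ?Q p) \<le> C"
        using bound[OF p] by (simp add: mult.assoc)
      then have "exp (-2 * u p) * ?Q p \<le> fC'' C (ycoord p)"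
        using False y by (simp add: fC''_def field_simps)
      moreover have "0 \<le> ?G p" by simp
      ultimately show ?thesis by linarith
    qed
    moreover have "- Lap u p = exp (-2 * u p) * ?Q p"
      using sol[OF p] by simp
    ultimately show "(- Lap u p - ?G p - fC'' C (ycoord p)) * v p \<le> 0"
      using v_nonneg[of p] by (simp add: mult_nonpos_nonneg)
  qed
  finally show "(LINT p:Xspace|lborel. - ?w p * Lap v p - ?G p * v p) \<le> 0"
    by simp
qed

lemma classical_supersol_add_ycoord:
  assumes u: "Ck_on 2 Xspace u" and p: "p \<in> Xspace"
    and sol: "Lap u p + exp (-2 * u p) * (cmod (poly P (zcoord p)))\<^sup>2 = 0"
  shows "Lap (\<lambda>q. u q + ycoord q) p + exp (-2 * (u p + ycoord p)) * (cmod (poly P (zcoord p)))\<^sup>2 \<le> 0"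
proof -
  have "exp (-2 * (u p + ycoord p)) \<le> exp (-2 * u p)"
    using p by (simp add: Xspace_def)
  then have "exp (-2 * (u p + ycoord p)) * (cmod (poly P (zcoord p)))\<^sup>2
      \<le> exp (-2 * u p) * (cmod (poly P (zcoord p)))\<^sup>2"
    by (rule mult_right_mono) simp
  then show ?thesis using sol Lap_add_ycoord[OF u p] by simp
qed

lemma bdd_above_image_power2:
  fixes f :: "'a \<Rightarrow> real"
  assumes "bdd_above (f ` S)" "\<And>x. x \<in> S \<Longrightarrow> 0 \<le> f x"
  shows "bdd_above ((\<lambda>x. (f x)\<^sup>2) ` S)"
proof -
  obtain M where "\<And>x. x \<in> S \<Longrightarrow> f x \<le> M"
    using assms(1) by (auto simp: bdd_above_def)
  then have "\<And>x. x \<in> S \<Longrightarrow> (f x)\<^sup>2 \<le> M\<^sup>2"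
    using assms(2) by (intro power_mono) auto
  then show ?thesis by (auto simp: bdd_above_def)
qed

lemma bdd_above_squared_weight:
  assumes "bdd_above ((\<lambda>p. ycoord p * exp (- u p) * cmod (poly P (zcoord p))) ` Xspace)"
  shows "bdd_above ((\<lambda>p. (ycoord p)\<^sup>2 * exp (-2 * u p) * (cmod (poly P (zcoord p)))\<^sup>2) ` Xspace)"
proof -
  have "bdd_above ((\<lambda>p. (ycoord p * exp (- u p) * cmod (poly P (zcoord p)))\<^sup>2) ` Xspace)"
    by (rule bdd_above_image_power2[OF assms]) (simp add: Xspace_def)
  moreover have "exp (-2 * u p) = (exp (- u p))\<^sup>2" for p
    by (simp add: power2_eq_square exp_add[symmetric])
  ultimately show ?thesis by (simp add: power_mult_distrib)
qed

theorem mainTheorem1: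
  fixes P :: "complex poly" and u0 :: "real \<times> real \<times> real \<Rightarrow> real"
    and R0 K :: real
  assumes P_nz: "P \<noteq> 0"
    and u0_smooth: "smooth_on Xspace u0"
    and u0_sol: "\<forall>p\<in>Xspace. Lap u0 p + exp (-2 * u0 p) * (cmod (poly P (zcoord p)))\<^sup>2 = 0"
    and u0_bdd: "bdd_above ((\<lambda>p. ycoord p * exp (- u0 p) * cmod (poly P (zcoord p))) ` Xspace)"
    and R0_pos: "R0 > 0" and K_pos: "K > 0"
    and u0_asym: "\<forall>p\<in>Xspace. Rad p \<ge> R0 \<longrightarrow>
        \<bar>u0 p - real (degree P) * ln (Rad p) - ln (ycoord p)\<bar> \<le> K"
  shows "smooth_on Xspace (\<lambda>p. u0 p + ycoord p)
      \<and> (\<forall>p\<in>Xspace. Lap (\<lambda>q. u0 q + ycoord q) p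
            + exp (-2 * (u0 p + ycoord p)) * (cmod (poly P (zcoord p)))\<^sup>2 \<le> 0)
      \<and> weak_supersol P (\<lambda>p. u0 p + ycoord p)
      \<and> (\<forall>C::real. C \<ge> max 1 (SUP p\<in>Xspace. (ycoord p)\<^sup>2 * exp (-2 * u0 p) * (cmod (poly P (zcoord p)))\<^sup>2) \<longrightarrow>
           weak_subsol P (\<lambda>p. u0 p + fC C (ycoord p))
           \<and> (\<forall>p\<in>Xspace. u0 p \<le> u0 p + fC C (ycoord p)
                \<and> u0 p + fC C (ycoord p) \<le> u0 p + ycoord p))"
proof -
  have u0: "Ck_on 2 Xspace u0" using u0_smooth unfolding smooth_on_def by blast
  have classical: "Lap (\<lambda>q. u0 q + ycoord q) p
      + exp (-2 * (u0 p + ycoord p)) * (cmod (poly P (zcoord p)))\<^sup>2 \<le> 0" if "p \<in> Xspace" for p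
    using classical_supersol_add_ycoord[OF u0 that] u0_sol that by blast
  show ?thesis
  proof (intro conjI ballI allI impI)
    show "smooth_on Xspace (\<lambda>p. u0 p + ycoord p)"
      using Ck_on_add[OF open_Xspace] u0_smooth Ck_on_ycoord unfolding smooth_on_def by blast
    then show "weak_supersol P (\<lambda>p. u0 p + ycoord p)"
      using weak_supersol_if_classical classical unfolding smooth_on_def by blast
    fix C assume C: "C \<ge> max 1 (SUP p\<in>Xspace. (ycoord p)\<^sup>2 * exp (-2 * u0 p) * (cmod (poly P (zcoord p)))\<^sup>2)"
    then have "0 < C" by simp
    have "(ycoord p)\<^sup>2 * exp (-2 * u0 p) * (cmod (poly P (zcoord p)))\<^sup>2 \<le> C" if "p \<in> Xspace" for p
      using cSUP_upper[OF that bdd_above_squared_weight[OF u0_bdd]] C by simp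
    then show "weak_subsol P (\<lambda>p. u0 p + fC C (ycoord p))"
      using weak_subsol_add_fC[OF u0 _ \<open>0 < C\<close>] u0_sol by blast
    fix p assume "p \<in> Xspace"
    then show "u0 p \<le> u0 p + fC C (ycoord p)" "u0 p + fC C (ycoord p) \<le> u0 p + ycoord p"
      using fC_nonneg[OF \<open>0 < C\<close>] fC_le[OF \<open>0 < C\<close>] by (simp_all add: Xspace_def)
  qed (rule classical)
qed

end
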